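(* There exist finite constants $M_{t,j}\ge 0$ ($t\in\mathcal T$, $j=1,2$), depending only on the multilinear program and not on $\hat v$, such that for every indicator vector $\hat v\in\{0,1\}^{\mathcal T}$ of a proper triple set and every optimal solution $(\lambda,\mu)$ of the linear program $\mathrm{D}(\hat v)$ with $\lambda_{t,1}=\lambda_{t,2}=\lambda_{t,3}=0$ for every $t$ with $\hat v_t=0$, we have $\lambda_{t,j}\le M_{t,j}$ for all $t\in\mathcal T$ and $j=1,2$.
   Context: A multilinear program has data $n,m$, coefficients $\alpha_i\in\mathbb{R}$ and nonempty index sets $J_i\subseteq[n]$. Let $\mathcal N=\bigcup_i\{J:\emptyset\ne J\subseteq J_i\}$ and $\beta_J=\sum_{i:J_i=J}\alpha_i$. A triple is $t=(J,J',J'')$ with $J''\in\mathcal N$, $|J''|\ge2$, $J,J'$ nonempty, disjoint, $J\cup J'=J''$, listed with $J,J'$ in lexicographic order; $\mathsf{tail1}(t)=J$, $\mathsf{tail2}(t)=J'$, $\mathsf{head}(t)=J''$; $\mathcal T$ is the set of all triples. A proper triple set is a set $T\subseteq\mathcal T$ containing a subset $T'$ such that (1) every $J_i$ with $|J_i|>1$ is the head of some triple in $T'$, and (2) whenever a set $J$ with $|J|>1$ is the first or second element of a triple in $T'$, $J$ is the head of a different triple in $T'$; its indicator vector has $\hat v_t=1$ iff $t\in T$. $\mathrm{D}(\hat v)$: maximize $-\sum_{t\in\mathcal T}[(1-\hat v_t)(\lambda_{t,1}+\lambda_{t,2})+(2-\hat v_t)\lambda_{t,3}]-\sum_{J\in\mathcal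 N}\mu_J$ over $\lambda\ge0,\mu\ge0$ subject to, for every $J\in\mathcal N$, $\beta_J+\sum_{t:\mathsf{tail1}(t)=J}(-\lambda_{t,1}+\lambda_{t,3})+\sum_{t:\mathsf{tail2}(t)=J}(-\lambda_{t,2}+\lambda_{t,3})+\sum_{t:\mathsf{head}(t)=J}(\lambda_{t,1}+\lambda_{t,2}-\lambda_{t,3})+\mu_J\ge0$. *)

theory Defs
  imports Complex_Main
begin

text \<open>Multilinear program data: n, m, coefficients alpha i and index sets Js i (i in {1..m}).
Subsets of [n] are represented as nat sets; a triple is (J, J', J'').\<close>

type_synonym triple = "nat set \<times> nat set \<times> nat set"

definition calN :: "nat \<Rightarrow> (nat \<Rightarrow> nat set) \<Rightarrow> nat set set" where
  "calN m Js = (\<Union>i\<in>{1..m}. {J. J \<noteq> {} \<and> J \<subseteq> Js i})"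

definition beta :: "nat \<Rightarrow> (nat \<Rightarrow> real) \<Rightarrow> (nat \<Rightarrow> nat set) \<Rightarrow> nat set \<Rightarrow> real" where
  "beta m \<alpha> Js J = (\<Sum>i\<in>{i\<in>{1..m}. Js i = J}. \<alpha> i)"

definition tail1 :: "triple \<Rightarrow> nat set" where "tail1 t = fst t"
definition tail2 :: "triple \<Rightarrow> nat set" where "tail2 t = fst (snd t)"
definition head :: "triple \<Rightarrow> nat set" where "head t = snd (snd t)"

definition lex_less :: "nat set \<Rightarrow> nat set \<Rightarrow> bool" where
  "lex_less J J' = lexordp (<) (sorted_list_of_set J) (sorted_list_of_set J')"

definition calT :: "nat \<Rightarrow> (nat \<Rightarrow> nat set) \<Rightarrow> triple set" where
  "calT m Js = {(J, J', J''). J'' \<in> calN m Js \<and> card J'' \<ge> 2 \<and> J \<noteq> {} \<and> J' \<noteq> {}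
      \<and> J \<inter> J' = {} \<and> J \<union> J' = J'' \<and> lex_less J J'}"

definition proper_triple_set :: "nat \<Rightarrow> (nat \<Rightarrow> nat set) \<Rightarrow> triple set \<Rightarrow> bool" where
  "proper_triple_set m Js T \<longleftrightarrow> T \<subseteq> calT m Js \<and>
     (\<exists>T' \<subseteq> T.
        (\<forall>i\<in>{1..m}. card (Js i) > 1 \<longrightarrow> (\<exists>t\<in>T'. head t = Js i)) \<and>
        (\<forall>t\<in>T'. \<forall>J\<in>{tail1 t, tail2 t}. card J > 1 \<longrightarrow>
             (\<exists>t'\<in>T'. t' \<noteq> t \<and> head t' = J)))"

definition indicator_vec :: "triple set \<Rightarrow> triple \<Rightarrow> real" where
  "indicator_vec T t = (if t \<in> T then 1 else 0)"

text \<open>The dual LP D(vhat): variables lam t k (k = 1,2,3) and mu J.\<close>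
definition D_feasible :: "nat \<Rightarrow> (nat \<Rightarrow> real) \<Rightarrow> (nat \<Rightarrow> nat set)
    \<Rightarrow> (triple \<Rightarrow> nat \<Rightarrow> real) \<Rightarrow> (nat set \<Rightarrow> real) \<Rightarrow> bool" where
  "D_feasible m \<alpha> Js lam mu \<longleftrightarrow>
     (\<forall>t\<in>calT m Js. \<forall>k\<in>{1,2,3}. lam t k \<ge> 0) \<and>
     (\<forall>J\<in>calN m Js. mu J \<ge> 0) \<and>
     (\<forall>J\<in>calN m Js.
        beta m \<alpha> Js J
        + (\<Sum>t\<in>{t\<in>calT m Js. tail1 t = J}. - lam t 1 + lam t 3)
        + (\<Sum>t\<in>{t\<in>calT m Js. tail2 t = J}. - lam t 2 + lam t 3)
        + (\<Sum>t\<in>{t\<in>calT m Js. head t = J}. lam t 1 + lam t 2 - lam t 3)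
        + mu J \<ge> 0)"

definition D_obj :: "nat \<Rightarrow> (nat \<Rightarrow> nat set) \<Rightarrow> (triple \<Rightarrow> real)
    \<Rightarrow> (triple \<Rightarrow> nat \<Rightarrow> real) \<Rightarrow> (nat set \<Rightarrow> real) \<Rightarrow> real" where
  "D_obj m Js v lam mu =
     - (\<Sum>t\<in>calT m Js. (1 - v t) * (lam t 1 + lam t 2) + (2 - v t) * lam t 3)
     - (\<Sum>J\<in>calN m Js. mu J)"

definition D_optimal :: "nat \<Rightarrow> (nat \<Rightarrow> real) \<Rightarrow> (nat \<Rightarrow> nat set) \<Rightarrow> (triple \<Rightarrow> real)
    \<Rightarrow> (triple \<Rightarrow> nat \<Rightarrow> real) \<Rightarrow> (nat set \<Rightarrow> real) \<Rightarrow> bool" where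
  "D_optimal m \<alpha> Js v lam mu \<longleftrightarrow>
     D_feasible m \<alpha> Js lam mu \<and>
     (\<forall>lam' mu'. D_feasible m \<alpha> Js lam' mu' \<longrightarrow> D_obj m Js v lam' mu' \<le> D_obj m Js v lam mu)"

end

theory Submission
  imports Defs
begin

text \<open>Comparing an optimal dual solution with the feasible point \<open>\<lambda> = 0\<close>,
\<open>\<mu>\<^sub>J = max 0 (-\<beta>\<^sub>J)\<close> bounds \<open>\<Sum> \<lambda>\<^sub>t\<^sub>,\<^sub>3 + \<Sum> \<mu>\<^sub>J\<close> by a constant,
since every \<open>\<lambda>\<^sub>t\<^sub>,\<^sub>3\<close> has weight \<open>2 - v\<^sub>t \<ge> 1\<close> in the objective.
Read as a flow on sets, the constraint at \<open>J\<close> then says that the outflow of \<open>J\<close>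
(the \<open>\<lambda>\<^sub>t\<^sub>,\<^sub>1\<close>, \<open>\<lambda>\<^sub>t\<^sub>,\<^sub>2\<close> of the triples with \<open>J\<close> as a tail) exceeds its inflow
(the \<open>\<lambda>\<^sub>t\<^sub>,\<^sub>1 + \<lambda>\<^sub>t\<^sub>,\<^sub>2\<close> of the triples with head \<open>J\<close>) by at most a constant. The inflow
of \<open>J\<close> is bounded by the outflows of the strictly smaller tails, so induction on \<open>|J|\<close>
bounds every outflow, hence every \<open>\<lambda>\<^sub>t\<^sub>,\<^sub>1\<close>, \<open>\<lambda>\<^sub>t\<^sub>,\<^sub>2\<close>.\<close>

definition outflow :: "nat \<Rightarrow> (nat \<Rightarrow> nat set) \<Rightarrow> (triple \<Rightarrow> nat \<Rightarrow> real) \<Rightarrow> nat set \<Rightarrow> real" where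
  "outflow m Js lam J =
     (\<Sum>t\<in>{t\<in>calT m Js. tail1 t = J}. lam t 1) + (\<Sum>t\<in>{t\<in>calT m Js. tail2 t = J}. lam t 2)"

definition inflow :: "nat \<Rightarrow> (nat \<Rightarrow> nat set) \<Rightarrow> (triple \<Rightarrow> nat \<Rightarrow> real) \<Rightarrow> nat set \<Rightarrow> real" where
  "inflow m Js lam J = (\<Sum>t\<in>{t\<in>calT m Js. head t = J}. lam t 1 + lam t 2)"

lemma calN_subset_Pow: "calN m Js \<subseteq> Pow (\<Union>i\<in>{1..m}. Js i)"
  unfolding calN_def by blast

lemma finite_calN:
  assumes "\<forall>i\<in>{1..m}. finite (Js i)"
  shows "finite (calN m Js)"
  using assms by (intro finite_subset[OF calN_subset_Pow]) auto

lemma calN_memD: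
  assumes "\<forall>i\<in>{1..m}. finite (Js i)" and "J \<in> calN m Js"
  shows "finite J" "J \<noteq> {}"
  using assms calN_subset_Pow[of m Js] by (auto simp: calN_def intro: finite_subset)

lemma calT_memD:
  assumes "t \<in> calT m Js"
  shows "head t \<in> calN m Js" "tail1 t \<in> calN m Js" "tail2 t \<in> calN m Js"
    "tail1 t \<subset> head t" "tail2 t \<subset> head t"
proof -
  obtain J J' J'' where t: "t = (J, J', J'')" by (cases t) auto
  have J'': "J'' \<in> calN m Js" "J \<noteq> {}" "J' \<noteq> {}" "J \<inter> J' = {}" "J \<union> J' = J''"
    using assms unfolding t calT_def by auto
  then show "head t \<in> calN m Js" "tail1 t \<in> calN m Js" "tail2 t \<in> calN m Js"
    "tail1 t \<subset> head t" "tail2 t \<subset> head t"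
    unfolding t head_def tail1_def tail2_def calN_def by auto
qed

lemma finite_calT:
  assumes "\<forall>i\<in>{1..m}. finite (Js i)"
  shows "finite (calT m Js)"
proof (rule finite_subset)
  show "calT m Js \<subseteq> calN m Js \<times> calN m Js \<times> calN m Js"
    using calT_memD by (force simp: tail1_def tail2_def head_def)
  show "finite (calN m Js \<times> calN m Js \<times> calN m Js)"
    using finite_calN[OF assms] by blast
qed

lemma beta_le_sum_abs: "beta m \<alpha> Js J \<le> (\<Sum>i\<in>{1..m}. \<bar>\<alpha> i\<bar>)"
proof -
  have "beta m \<alpha> Js J \<le> (\<Sum>i\<in>{i\<in>{1..m}. Js i = J}. \<bar>\<alpha> i\<bar>)"
    unfolding beta_def by (rule sum_mono) simp
  also have "\<dots> \<le> (\<Sum>i\<in>{1..m}. \<bar>\<alpha> i\<bar>)"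
    by (rule sum_mono2) auto
  finally show ?thesis .
qed

lemma D_feasible_zero_lam:
  "D_feasible m \<alpha> Js (\<lambda>t k. 0) (\<lambda>J. max 0 (- beta m \<alpha> Js J))"
  unfolding D_feasible_def by auto

lemma D_optimal_sum_lam3_mu_le:
  assumes opt: "D_optimal m \<alpha> Js v lam mu" and v_le_1: "\<forall>t\<in>calT m Js. v t \<le> 1"
  shows "(\<Sum>t\<in>calT m Js. lam t 3) + (\<Sum>J\<in>calN m Js. mu J)
           \<le> (\<Sum>J\<in>calN m Js. max 0 (- beta m \<alpha> Js J))"
proof -
  have feas: "D_feasible m \<alpha> Js lam mu"
    using opt unfolding D_optimal_def by blast
  have "lam t 3 \<le> (1 - v t) * (lam t 1 + lam t 2) + (2 - v t) * lam t 3"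
    if "t \<in> calT m Js" for t
  proof -
    have "0 \<le> (1 - v t) * (lam t 1 + lam t 2 + lam t 3)"
      using that v_le_1 feas unfolding D_feasible_def by simp
    then show ?thesis by (simp add: algebra_simps)
  qed
  then have "(\<Sum>t\<in>calT m Js. lam t 3) + (\<Sum>J\<in>calN m Js. mu J) \<le> - D_obj m Js v lam mu"
    unfolding D_obj_def by (simp add: sum_mono)
  also have "\<dots> \<le> - D_obj m Js v (\<lambda>t k. 0) (\<lambda>J. max 0 (- beta m \<alpha> Js J))"
    using opt D_feasible_zero_lam unfolding D_optimal_def by simp
  finally show ?thesis
    unfolding D_obj_def by simp
qed

lemma D_feasible_outflow_le_inflow:
  assumes fin: "finite (calT m Js)" and feas: "D_feasible m \<alpha> Js lam mu" and J: "J \<in> calN m Js"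
  shows "outflow m Js lam J
           \<le> beta m \<alpha> Js J + 2 * (\<Sum>t\<in>calT m Js. lam t 3) + mu J + inflow m Js lam J"
proof -
  have lam_nonneg: "\<And>t k. t \<in> calT m Js \<Longrightarrow> k \<in> {1, 2, 3} \<Longrightarrow> lam t k \<ge> 0"
    using feas unfolding D_feasible_def by blast
  have lam3_subset: "(\<Sum>t\<in>{t\<in>calT m Js. P t}. lam t 3) \<le> (\<Sum>t\<in>calT m Js. lam t 3)" for P
    using fin lam_nonneg by (intro sum_mono2) auto
  have head_lam3: "0 \<le> (\<Sum>t\<in>{t\<in>calT m Js. head t = J}. lam t 3)"
    using lam_nonneg by (intro sum_nonneg) auto
  have "0 \<le> beta m \<alpha> Js J
        + (\<Sum>t\<in>{t\<in>calT m Js. tail1 t = J}. - lam t 1 + lam t 3)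
        + (\<Sum>t\<in>{t\<in>calT m Js. tail2 t = J}. - lam t 2 + lam t 3)
        + (\<Sum>t\<in>{t\<in>calT m Js. head t = J}. lam t 1 + lam t 2 - lam t 3)
        + mu J"
    using feas J unfolding D_feasible_def by blast
  also have "\<dots> = beta m \<alpha> Js J - outflow m Js lam J
        + (\<Sum>t\<in>{t\<in>calT m Js. tail1 t = J}. lam t 3)
        + (\<Sum>t\<in>{t\<in>calT m Js. tail2 t = J}. lam t 3)
        + inflow m Js lam J - (\<Sum>t\<in>{t\<in>calT m Js. head t = J}. lam t 3) + mu J"
    unfolding outflow_def inflow_def by (simp add: sum.distrib sum_subtractf sum_negf)
  finally show ?thesis
    using lam3_subset[of "\<lambda>t. tail1 t = J"] lam3_subset[of "\<lambda>t. tail2 t = J"] head_lam3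
    by linarith
qed

lemma D_optimal_outflow_le_inflow:
  assumes fin: "\<forall>i\<in>{1..m}. finite (Js i)"
    and opt: "D_optimal m \<alpha> Js v lam mu" and v_le_1: "\<forall>t\<in>calT m Js. v t \<le> 1"
    and J: "J \<in> calN m Js"
  shows "outflow m Js lam J
           \<le> (\<Sum>i\<in>{1..m}. \<bar>\<alpha> i\<bar>) + 2 * (\<Sum>J\<in>calN m Js. max 0 (- beta m \<alpha> Js J))
             + inflow m Js lam J"
proof -
  have feas: "D_feasible m \<alpha> Js lam mu" using opt unfolding D_optimal_def by blast
  have "0 \<le> (\<Sum>t\<in>calT m Js. lam t 3)" "0 \<le> mu J" "mu J \<le> (\<Sum>J\<in>calN m Js. mu J)"
    using feas J finite_calN[OF fin] unfolding D_feasible_def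
    by (auto intro: sum_nonneg member_le_sum)
  then show ?thesis
    using D_feasible_outflow_le_inflow[OF finite_calT[OF fin] feas J]
      D_optimal_sum_lam3_mu_le[OF opt v_le_1] beta_le_sum_abs[of m \<alpha> Js J]
    by linarith
qed

lemma lam_le_outflow_tails:
  assumes fin: "finite (calT m Js)"
    and nonneg: "\<forall>t\<in>calT m Js. lam t 1 \<ge> 0 \<and> lam t 2 \<ge> 0" and t: "t \<in> calT m Js"
  shows "lam t 1 \<le> outflow m Js lam (tail1 t)" "lam t 2 \<le> outflow m Js lam (tail2 t)"
proof -
  have sums_nonneg: "0 \<le> (\<Sum>t\<in>{t\<in>calT m Js. P t}. lam t k)" if "k \<in> {1, 2}" for P k
    using nonneg that by (intro sum_nonneg) auto
  have "lam t 1 \<le> (\<Sum>t'\<in>{t'\<in>calT m Js. tail1 t' = tail1 t}. lam t' 1)"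
    using fin nonneg t by (intro member_le_sum) auto
  then show "lam t 1 \<le> outflow m Js lam (tail1 t)"
    unfolding outflow_def using sums_nonneg[where P = "\<lambda>t'. tail2 t' = tail1 t" and k = 2] by simp
  have "lam t 2 \<le> (\<Sum>t'\<in>{t'\<in>calT m Js. tail2 t' = tail2 t}. lam t' 2)"
    using fin nonneg t by (intro member_le_sum) auto
  then show "lam t 2 \<le> outflow m Js lam (tail2 t)"
    unfolding outflow_def using sums_nonneg[where P = "\<lambda>t'. tail1 t' = tail2 t" and k = 1] by simp
qed

lemma outflow_le_geometric:
  fixes lam :: "triple \<Rightarrow> nat \<Rightarrow> real"
  assumes fin: "\<forall>i\<in>{1..m}. finite (Js i)"
    and nonneg: "\<forall>t\<in>calT m Js. lam t 1 \<ge> 0 \<and> lam t 2 \<ge> 0"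
    and step: "\<forall>J\<in>calN m Js. outflow m Js lam J \<le> A + inflow m Js lam J"
    and "A \<ge> 0"
  shows "J \<in> calN m Js \<Longrightarrow> card J \<le> k
           \<Longrightarrow> outflow m Js lam J \<le> A * (2 * card (calT m Js) + 1) ^ k"
proof (induction k arbitrary: J)
  case 0
  then show ?case using calN_memD[OF fin] by simp
next
  case (Suc k)
  define N where "N = card (calT m Js)"
  define b where "b = A * (2 * N + 1) ^ k"
  have "b \<ge> 0" unfolding b_def using \<open>A \<ge> 0\<close> by simp
  have tails_le_b: "lam t 1 + lam t 2 \<le> 2 * b" if "t \<in> {t\<in>calT m Js. head t = J}" for t
  proof -
    have t: "t \<in> calT m Js" and "head t = J" using that by auto
    then have "card (tail1 t) \<le> k" "card (tail2 t) \<le> k"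
      using Suc.prems calT_memD[OF t] calN_memD(1)[OF fin]
      by (metis Suc_le_lessD less_Suc_eq_le order.strict_trans2 psubset_card_mono)+
    then have "outflow m Js lam (tail1 t) \<le> b" "outflow m Js lam (tail2 t) \<le> b"
      using Suc.IH calT_memD[OF t] unfolding b_def N_def by auto
    then show ?thesis
      using lam_le_outflow_tails[OF finite_calT[OF fin] nonneg t] by linarith
  qed
  have "inflow m Js lam J \<le> (\<Sum>t\<in>{t\<in>calT m Js. head t = J}. 2 * b)"
    unfolding inflow_def using tails_le_b by (rule sum_mono)
  also have "\<dots> = card {t\<in>calT m Js. head t = J} * (2 * b)" by simp
  also have "\<dots> \<le> N * (2 * b)"
    unfolding N_def using \<open>b \<ge> 0\<close> finite_calT[OF fin]
    by (intro mult_right_mono) (auto intro: card_mono)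
  finally have "outflow m Js lam J \<le> A + 2 * N * b"
    using step Suc.prems by fastforce
  also have "\<dots> \<le> A * (2 * N + 1) ^ Suc k"
  proof -
    have "A \<le> b"
      unfolding b_def using \<open>A \<ge> 0\<close> by (simp add: mult_le_cancel_left1)
    then show ?thesis unfolding b_def by (simp add: algebra_simps)
  qed
  finally show ?case unfolding N_def .
qed

theorem lemma5:
  fixes n m :: nat and \<alpha> :: "nat \<Rightarrow> real" and Js :: "nat \<Rightarrow> nat set"
  assumes "\<forall>i\<in>{1..m}. Js i \<noteq> {} \<and> Js i \<subseteq> {1..n}"
  shows "\<exists>M :: triple \<Rightarrow> nat \<Rightarrow> real.
           (\<forall>t\<in>calT m Js. \<forall>j\<in>{1,2}. M t j \<ge> 0) \<and>
           (\<forall>T lam mu. proper_triple_set m Js T \<longrightarrow>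
              D_optimal m \<alpha> Js (indicator_vec T) lam mu \<longrightarrow>
              (\<forall>t\<in>calT m Js. indicator_vec T t = 0 \<longrightarrow> lam t 1 = 0 \<and> lam t 2 = 0 \<and> lam t 3 = 0) \<longrightarrow>
              (\<forall>t\<in>calT m Js. \<forall>j\<in>{1,2}. lam t j \<le> M t j))"
proof -
  have fin: "\<forall>i\<in>{1..m}. finite (Js i)"
    using assms finite_subset by blast
  have card_le_n: "card J \<le> n" if "J \<in> calN m Js" for J
  proof -
    have "J \<subseteq> {1..n}" using that assms unfolding calN_def by blast
    then show ?thesis using card_mono[of "{1..n}" J] by simp
  qed
  define A where "A = (\<Sum>i\<in>{1..m}. \<bar>\<alpha> i\<bar>) + 2 * (\<Sum>J\<in>calN m Js. max 0 (- beta m \<alpha> Js J))"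
  have "A \<ge> 0" unfolding A_def by (simp add: sum_nonneg)
  show ?thesis
  proof (intro exI[of _ "\<lambda>t j. A * (2 * card (calT m Js) + 1) ^ n"] conjI ballI allI impI)
    show "A * (2 * card (calT m Js) + 1) ^ n \<ge> 0" using \<open>A \<ge> 0\<close> by simp
  next
    fix T lam mu t j
    assume opt: "D_optimal m \<alpha> Js (indicator_vec T) lam mu"
      and t: "t \<in> calT m Js" and j: "j \<in> {1::nat, 2}"
    have nonneg: "\<forall>t\<in>calT m Js. lam t 1 \<ge> 0 \<and> lam t 2 \<ge> 0"
      using opt unfolding D_optimal_def D_feasible_def by simp
    have "\<forall>J\<in>calN m Js. outflow m Js lam J \<le> A + inflow m Js lam J"
      using D_optimal_outflow_le_inflow[OF fin opt] unfolding A_def indicator_vec_def by simp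
    then have "outflow m Js lam J \<le> A * (2 * card (calT m Js) + 1) ^ n" if "J \<in> calN m Js" for J
      using outflow_le_geometric[OF fin nonneg _ \<open>A \<ge> 0\<close> that card_le_n[OF that]] by blast
    then show "lam t j \<le> A * (2 * card (calT m Js) + 1) ^ n"
      using j lam_le_outflow_tails[OF finite_calT[OF fin] nonneg t] calT_memD[OF t] by fastforce
  qed
qed

end
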